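(* Let $\hat x_1,\dots,\hat x_n\in\mathbb R^{k}$ with labels $y_1,\dots,y_n\in\{-1,+1\}$, and let $\rho_l,\rho_d>0$. Let the learner's strategy be $\theta_l=(\mu_w,\sigma_w)\in\Theta_l$, where $\Theta_l\subseteq\mathbb R^{k+1}\times\mathbb R^{k+1}_{\ge 0}$ is non-empty, compact and convex, and $w=(\tilde w,b)\in\mathbb R^{k}\times\mathbb R$ is distributed as $w=\mu_w+D(\sigma_w)z$ with $z\sim\mathcal N(0,I_{k+1})$. Let the data generator's strategy be $\theta_d=(\theta_d^{(1)},\dots,\theta_d^{(n)})\in\Theta_d=\prod_{i=1}^n\Theta_d^{(i)}$, $\theta_d^{(i)}=(\mu_{x_i},\sigma_{x_i})$, with each $\Theta_d^{(i)}\subseteq\mathbb R^k\times\mathbb R^k_{\ge0}$ non-empty, compact and convex, and $x_i=\mu_{x_i}+D(\sigma_{x_i})z_i$ with $z_i\sim\mathcal N(0,I_k)$, all of $z,z_1,\dots,z_n$ independent. Define $$c_l(w,X)=\frac{\rho_l}{2}\|\tilde w\|^2+\sum_{i=1}^n[1-y_i(\tilde w^\top x_i+b)]_+,\qquad c_d(w,X)=\frac{\rho_d}{2}\sum_{i=1}^n\|x_i-\hat x_i\|^2+\sum_{i=1}^n[1+y_i(\tilde w^\top x_i+b)]_+,$$ and $\bar c_l(\theta_l,\theta_d)=\mathbb E[c_l(w,X)]$, $\bar c_d(\theta_l,\theta_d)=\mathbb E[c_d(w,X)]$. Then $\bar c_l(\cdot,\theta_d)$ is convex on $\Theta_l$ for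 every $\theta_d\in\Theta_d$, $\bar c_d(\theta_l,\cdot)$ is convex on $\Theta_d$ for every $\theta_l\in\Theta_l$, and the game has at least one Nash equilibrium $(\theta_l^\star,\theta_d^\star)$, i.e. $\theta_l^\star\in\arg\min_{\theta_l\in\Theta_l}\bar c_l(\theta_l,\theta_d^\star)$ and $\theta_d^\star\in\arg\min_{\theta_d\in\Theta_d}\bar c_d(\theta_l^\star,\theta_d)$.
   Context: $[z]_+=\max(0,z)$. $D(v)$ denotes the diagonal matrix with the vector $v$ on its diagonal (so the Gaussians are axis-aligned with mean $\mu$ and standard deviations $\sigma$). $X=(x_1,\dots,x_n)$. *)

theory Defs
  imports "HOL-Probability.Probability"
begin

text \<open>Dimensions: the feature index type 'k (so R^k = real^'k) and the sample
index type 'n (n = CARD('n)).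
The noise is a family of independent standard Gaussians indexed by
('k option + 'n * 'k): Inl (Some j) is coordinate j of z for w~, Inl None the
coordinate of z for b, Inr (i, j) coordinate j of z_i.\<close>

definition std_normal_measure :: "real measure" where
  "std_normal_measure = density lborel std_normal_density"

definition noise_space :: "(('k::finite) option + ('n::finite) \<times> 'k \<Rightarrow> real) measure" where
  "noise_space = PiM UNIV (\<lambda>_. std_normal_measure)"

type_synonym 'k lstrat = "((real^'k) \<times> real) \<times> ((real^'k) \<times> real)"
type_synonym 'k dstrat = "(real^'k) \<times> (real^'k)"

definition w_of :: "'k::finite lstrat \<Rightarrow> ('k option + ('n::finite) \<times> 'k \<Rightarrow> real) \<Rightarrow> (real^'k) \<times> real" where
  "w_of \<theta>l \<omega> =
     ((\<chi> j. fst (fst \<theta>l) $ j + fst (snd \<theta>l) $ j * \<omega> (Inl (Some j))),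
      snd (fst \<theta>l) + snd (snd \<theta>l) * \<omega> (Inl None))"

definition X_of :: "('k::finite dstrat)^('n::finite) \<Rightarrow> ('k option + 'n \<times> 'k \<Rightarrow> real) \<Rightarrow> real^'k^'n" where
  "X_of \<theta>d \<omega> = (\<chi> i. \<chi> j. fst (\<theta>d $ i) $ j + snd (\<theta>d $ i) $ j * \<omega> (Inr (i, j)))"

definition hinge :: "real \<Rightarrow> real" where
  "hinge z = max 0 z"

definition c_l :: "real \<Rightarrow> ('n::finite \<Rightarrow> real) \<Rightarrow> (real^'k::finite) \<times> real \<Rightarrow> real^'k^'n \<Rightarrow> real" where
  "c_l \<rho>l y w X = \<rho>l / 2 * (norm (fst w))\<^sup>2
      + (\<Sum>i\<in>UNIV. hinge (1 - y i * (fst w \<bullet> X $ i + snd w)))"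

definition c_d :: "real \<Rightarrow> ('n::finite \<Rightarrow> real) \<Rightarrow> real^'k^'n \<Rightarrow> (real^'k::finite) \<times> real \<Rightarrow> real^'k^'n \<Rightarrow> real" where
  "c_d \<rho>d y xhat w X = \<rho>d / 2 * (\<Sum>i\<in>UNIV. (norm (X $ i - xhat $ i))\<^sup>2)
      + (\<Sum>i\<in>UNIV. hinge (1 + y i * (fst w \<bullet> X $ i + snd w)))"

definition cbar_l :: "real \<Rightarrow> ('n::finite \<Rightarrow> real) \<Rightarrow> 'k::finite lstrat \<Rightarrow> ('k dstrat)^'n \<Rightarrow> real" where
  "cbar_l \<rho>l y \<theta>l \<theta>d =
     integral\<^sup>L (noise_space :: ('k option + 'n \<times> 'k \<Rightarrow> real) measure)
       (\<lambda>\<omega>. c_l \<rho>l y (w_of \<theta>l \<omega>) (X_of \<theta>d \<omega>))"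

definition cbar_d :: "real \<Rightarrow> ('n::finite \<Rightarrow> real) \<Rightarrow> real^'k^'n \<Rightarrow> 'k::finite lstrat \<Rightarrow> ('k dstrat)^'n \<Rightarrow> real" where
  "cbar_d \<rho>d y xhat \<theta>l \<theta>d =
     integral\<^sup>L (noise_space :: ('k option + 'n \<times> 'k \<Rightarrow> real) measure)
       (\<lambda>\<omega>. c_d \<rho>d y xhat (w_of \<theta>l \<omega>) (X_of \<theta>d \<omega>))"

end

theory Submission
  imports Defs
begin

text \<open>For a fixed noise sample both costs are continuous in the strategy pair and convex in
the player's own strategy: the weights and samples depend affinely on the means and standard
deviations, and the costs are squares and hinges of affine expressions. Expectation preserves
convexity, and continuity follows by dominated convergence, since on bounded sets of strategies
the costs grow at most quadratically in the Gaussian noise, which has finite second moments.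
The strategy sets are compact and convex, so Nash equilibria of the game exist: after adding
the strictly convex penalty \<open>e\<parallel>\<theta>\<parallel>\<^sup>2\<close> best responses become unique and continuous,
Brouwer's theorem yields an equilibrium of the penalised game, and a limit of these as
\<open>e \<rightarrow> 0\<close> is an equilibrium of the original game.\<close>

section \<open>Convexity\<close>

definition affine_fun :: "('a::real_vector \<Rightarrow> real) \<Rightarrow> bool" where
  "affine_fun L \<longleftrightarrow> (\<forall>x y u v. u + v = 1 \<longrightarrow> L (u *\<^sub>R x + v *\<^sub>R y) = u * L x + v * L y)"

lemma affine_fun_const: "affine_fun (\<lambda>x. c)"
  unfolding affine_fun_def by (metis distrib_right mult_1)

lemma affine_fun_add: "affine_fun L \<Longrightarrow> affine_fun K \<Longrightarrow> affine_fun (\<lambda>x. L x + K x)"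
  unfolding affine_fun_def by (simp add: algebra_simps)

lemma affine_fun_diff: "affine_fun L \<Longrightarrow> affine_fun K \<Longrightarrow> affine_fun (\<lambda>x. L x - K x)"
  unfolding affine_fun_def by (simp add: algebra_simps)

lemma affine_fun_cmult: "affine_fun L \<Longrightarrow> affine_fun (\<lambda>x. c * L x)"
  unfolding affine_fun_def by (simp add: algebra_simps)

lemma affine_fun_mult_const: "affine_fun L \<Longrightarrow> affine_fun (\<lambda>x. L x * c)"
  unfolding affine_fun_def by (simp add: algebra_simps)

lemma affine_fun_sum:
  "finite I \<Longrightarrow> (\<And>i. i \<in> I \<Longrightarrow> affine_fun (L i)) \<Longrightarrow> affine_fun (\<lambda>x. \<Sum>i\<in>I. L i x)"
  by (induction I rule: finite_induct) (simp_all add: affine_fun_const affine_fun_add)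

lemma convex_on_compose_affine_fun:
  assumes "convex_on UNIV \<phi>" "affine_fun L" "convex S"
  shows "convex_on S (\<lambda>x. \<phi> (L x))"
proof (rule convex_onI[OF _ assms(3)])
  fix t :: real and x y assume t: "0 < t" "t < 1" and "x \<in> S" "y \<in> S"
  have "L ((1 - t) *\<^sub>R x + t *\<^sub>R y) = (1 - t) * L x + t * L y"
    using assms(2) unfolding affine_fun_def by simp
  then show "\<phi> (L ((1 - t) *\<^sub>R x + t *\<^sub>R y)) \<le> (1 - t) * \<phi> (L x) + t * \<phi> (L y)"
    using convex_onD[OF assms(1), of t "L x" "L y"] t by simp
qed

lemma convex_max0: "convex_on UNIV (\<lambda>t::real. max 0 t)"
proof (rule convex_onI)
  fix t x y :: real assume "0 < t" "t < 1"
  then have "(1 - t) * x \<le> (1 - t) * max 0 x" "t * y \<le> t * max 0 y"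
    by (auto intro: mult_left_mono)
  moreover have "0 \<le> (1 - t) * max 0 x" "0 \<le> t * max 0 y" using \<open>t < 1\<close> \<open>0 < t\<close> by auto
  ultimately show "max 0 ((1 - t) *\<^sub>R x + t *\<^sub>R y) \<le> (1 - t) * max 0 x + t * max 0 y" by simp
qed simp

lemma convex_on_sum_fun:
  assumes "finite I" "convex S" "\<And>i. i \<in> I \<Longrightarrow> convex_on S (f i)"
  shows "convex_on S (\<lambda>x. \<Sum>i\<in>I. f i x)"
  using assms(1,3)
  by (induction I rule: finite_induct) (simp_all add: convex_on_const assms(2) convex_on_add)

lemma convex_on_integral:
  fixes G :: "'a::real_vector \<Rightarrow> 'w \<Rightarrow> real"
  assumes "convex S" "\<And>\<omega>. convex_on S (\<lambda>x. G x \<omega>)" "\<And>x. integrable M (G x)"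
  shows "convex_on S (\<lambda>x. \<integral>\<omega>. G x \<omega> \<partial>M)"
proof (rule convex_onI[OF _ assms(1)])
  fix t :: real and x y assume "0 < t" "t < 1" "x \<in> S" "y \<in> S"
  then have "(\<integral>\<omega>. G ((1 - t) *\<^sub>R x + t *\<^sub>R y) \<omega> \<partial>M) \<le> (\<integral>\<omega>. (1 - t) * G x \<omega> + t * G y \<omega> \<partial>M)"
    using assms(3) by (intro integral_mono convex_onD[OF assms(2)]) auto
  also have "\<dots> = (1 - t) * (\<integral>\<omega>. G x \<omega> \<partial>M) + t * (\<integral>\<omega>. G y \<omega> \<partial>M)"
    using assms(3) by simp
  finally show "(\<integral>\<omega>. G ((1 - t) *\<^sub>R x + t *\<^sub>R y) \<omega> \<partial>M) \<le> (1 - t) * (\<integral>\<omega>. G x \<omega> \<partial>M) + t * (\<integral>\<omega>. G y \<omega> \<partial>M)" .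
qed

section \<open>Existence of Nash equilibria\<close>

lemma norm_midpoint_power2_less:
  fixes a b :: "'a::real_inner"
  assumes "a \<noteq> b"
  shows "(norm ((1/2) *\<^sub>R a + (1/2) *\<^sub>R b))\<^sup>2 < (1/2) * (norm a)\<^sup>2 + (1/2) * (norm b)\<^sup>2"
proof -
  have "(norm ((1/2) *\<^sub>R a + (1/2) *\<^sub>R b))\<^sup>2
      = (1/2) * (norm a)\<^sup>2 + (1/2) * (norm b)\<^sup>2 - (1/4) * (norm (a - b))\<^sup>2"
    by (simp add: power2_norm_eq_inner inner_add_left inner_add_right inner_diff_left
        inner_diff_right inner_commute algebra_simps)
  then show ?thesis using assms by simp
qed

lemma regularized_minimizer_unique:
  fixes h :: "'a::real_inner \<Rightarrow> real"
  assumes h: "convex_on A h" and e: "e > 0"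
    and a1: "a1 \<in> A" "\<forall>a\<in>A. h a1 + e * (norm a1)\<^sup>2 \<le> h a + e * (norm a)\<^sup>2"
    and a2: "a2 \<in> A" "\<forall>a\<in>A. h a2 + e * (norm a2)\<^sup>2 \<le> h a + e * (norm a)\<^sup>2"
  shows "a1 = a2"
proof (rule ccontr)
  assume "a1 \<noteq> a2"
  define m where "m = (1/2) *\<^sub>R a1 + (1/2) *\<^sub>R a2"
  have "m \<in> A"
    unfolding m_def using convex_on_imp_convex[OF h] a1 a2 by (intro convexD) auto
  have "h m \<le> (1/2) * h a1 + (1/2) * h a2"
    using convex_onD[OF h, of "1/2" a1 a2] a1 a2 unfolding m_def by simp
  moreover have "e * (norm m)\<^sup>2 < e * ((1/2) * (norm a1)\<^sup>2 + (1/2) * (norm a2)\<^sup>2)"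
    unfolding m_def using e norm_midpoint_power2_less[OF \<open>a1 \<noteq> a2\<close>] by simp
  moreover have "h a1 + e * (norm a1)\<^sup>2 \<le> h m + e * (norm m)\<^sup>2"
    "h a1 + e * (norm a1)\<^sup>2 \<le> h a2 + e * (norm a2)\<^sup>2"
    "h a2 + e * (norm a2)\<^sup>2 \<le> h a1 + e * (norm a1)\<^sup>2"
    using a1 a2 \<open>m \<in> A\<close> by auto
  ultimately show False by (simp add: algebra_simps)
qed

lemma continuous_regularized_best_response:
  fixes h :: "'b::euclidean_space \<Rightarrow> 'a::euclidean_space \<Rightarrow> real"
  assumes A: "compact A" "convex A" "A \<noteq> {}" and B: "compact B"
    and cont: "continuous_on (B \<times> A) (\<lambda>p. h (fst p) (snd p))"
    and conv: "\<And>b. b \<in> B \<Longrightarrow> convex_on A (h b)"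
    and e: "e > 0"
  obtains r where "continuous_on B r"
    "\<And>b. b \<in> B \<Longrightarrow> r b \<in> A"
    "\<And>b a. b \<in> B \<Longrightarrow> a \<in> A \<Longrightarrow> h b (r b) + e * (norm (r b))\<^sup>2 \<le> h b a + e * (norm a)\<^sup>2"
proof -
  define H where "H b a = h b a + e * (norm a)\<^sup>2" for b a
  have contH: "continuous_on (B \<times> A) (\<lambda>p. H (fst p) (snd p))"
    unfolding H_def by (intro continuous_intros cont)
  have contH_fixed: "continuous_on (B \<times> A) (\<lambda>p. H (fst p) a)" if "a \<in> A" for a
    using that by (intro continuous_on_compose2[OF contH, of _ "\<lambda>p. (fst p, a)", simplified])
      (auto intro!: continuous_intros)
  have "\<exists>a\<in>A. \<forall>a'\<in>A. H b a \<le> H b a'" if "b \<in> B" for b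
    using that by (intro continuous_attains_inf[OF A(1,3)]
        continuous_on_compose2[OF contH, of _ "\<lambda>a. (b, a)", simplified])
      (auto intro!: continuous_intros)
  then obtain r where r: "\<And>b. b \<in> B \<Longrightarrow> r b \<in> A \<and> (\<forall>a\<in>A. H b (r b) \<le> H b a)"
    by metis
  \<comment> \<open>Strict convexity of \<open>H b\<close> makes the minimiser unique, so the graph of \<open>r\<close> is closed.\<close>
  have graph: "(\<lambda>b. (b, r b)) ` B = (B \<times> A) \<inter> (\<Inter>a\<in>A. {p \<in> B \<times> A. H (fst p) (snd p) \<le> H (fst p) a})"
  proof (intro equalityI subsetI)
    fix p assume p: "p \<in> (B \<times> A) \<inter> (\<Inter>a\<in>A. {p \<in> B \<times> A. H (fst p) (snd p) \<le> H (fst p) a})"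
    then have "snd p = r (fst p)"
      using regularized_minimizer_unique[OF conv e] r[of "fst p"] unfolding H_def by auto
    then show "p \<in> (\<lambda>b. (b, r b)) ` B" using p by (auto intro!: image_eqI[of _ _ "fst p"])
  qed (use r in auto)
  have closed_graph: "closed ((\<lambda>b. (b, r b)) ` B)"
    unfolding graph using A B
    by (intro closed_Int closed_INT ballI continuous_on_closed_Collect_le contH contH_fixed)
      (auto simp: compact_imp_closed compact_Times)
  have "continuous_on B r"
    by (rule continuous_from_closed_graph[OF A(1) _ closed_graph]) (use r in auto)
  with r that show ?thesis unfolding H_def by blast
qed

lemma regularized_equilibrium_exists:
  fixes f g :: "'a::euclidean_space \<Rightarrow> 'b::euclidean_space \<Rightarrow> real"
  assumes A: "compact A" "convex A" "A \<noteq> {}" and B: "compact B" "convex B" "B \<noteq> {}"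
    and cf: "continuous_on (B \<times> A) (\<lambda>p. f (snd p) (fst p))"
    and cg: "continuous_on (A \<times> B) (\<lambda>p. g (fst p) (snd p))"
    and vf: "\<And>b. b \<in> B \<Longrightarrow> convex_on A (\<lambda>a. f a b)"
    and vg: "\<And>a. a \<in> A \<Longrightarrow> convex_on B (g a)"
    and e: "e > 0"
  obtains a b where "a \<in> A" "b \<in> B"
    "\<And>a'. a' \<in> A \<Longrightarrow> f a b + e * (norm a)\<^sup>2 \<le> f a' b + e * (norm a')\<^sup>2"
    "\<And>b'. b' \<in> B \<Longrightarrow> g a b + e * (norm b)\<^sup>2 \<le> g a b' + e * (norm b')\<^sup>2"
proof -
  obtain r where r: "continuous_on B r" "\<And>b. b \<in> B \<Longrightarrow> r b \<in> A"
    "\<And>b a'. b \<in> B \<Longrightarrow> a' \<in> A \<Longrightarrow> f (r b) b + e * (norm (r b))\<^sup>2 \<le> f a' b + e * (norm a')\<^sup>2"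
    using continuous_regularized_best_response[of A B "\<lambda>b a. f a b", OF A B(1) cf vf e] by blast
  obtain s where s: "continuous_on A s" "\<And>a. a \<in> A \<Longrightarrow> s a \<in> B"
    "\<And>a b'. a \<in> A \<Longrightarrow> b' \<in> B \<Longrightarrow> g a (s a) + e * (norm (s a))\<^sup>2 \<le> g a b' + e * (norm b')\<^sup>2"
    using continuous_regularized_best_response[of B A g, OF B A(1) cg vg e] by blast
  have "continuous_on (A \<times> B) (\<lambda>p. (r (snd p), s (fst p)))"
    by (intro continuous_intros continuous_on_compose2[OF r(1)] continuous_on_compose2[OF s(1)]) auto
  moreover have "(\<lambda>p. (r (snd p), s (fst p))) \<in> A \<times> B \<rightarrow> A \<times> B" using r s by auto
  ultimately obtain p where "p \<in> A \<times> B" "(r (snd p), s (fst p)) = p"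
    using brouwer[of "A \<times> B" "\<lambda>p. (r (snd p), s (fst p))"] A B by (auto simp: compact_Times convex_Times)
  then show ?thesis using that[of "fst p" "snd p"] r(3) s(3) by (metis mem_Times_iff prod.inject surjective_pairing)
qed

lemma regularized_best_response_limit:
  fixes h :: "'b::metric_space \<Rightarrow> 'a::real_normed_vector \<Rightarrow> real"
  assumes cont: "continuous_on (B \<times> A) (\<lambda>p. h (fst p) (snd p))"
    and seq: "\<And>m. b m \<in> B" "\<And>m. a m \<in> A" "b \<longlonglongrightarrow> b0" "a \<longlonglongrightarrow> a0" "e \<longlonglongrightarrow> 0"
    and lim: "b0 \<in> B" "a0 \<in> A"
    and a': "a' \<in> A"
    and resp: "\<And>m. h (b m) (a m) + e m * (norm (a m))\<^sup>2 \<le> h (b m) a' + e m * (norm a')\<^sup>2"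
  shows "h b0 a0 \<le> h b0 a'"
proof -
  have "(\<lambda>m. (b m, a m)) \<longlonglongrightarrow> (b0, a0)" "(\<lambda>m. (b m, a')) \<longlonglongrightarrow> (b0, a')"
    using seq by (auto intro!: tendsto_intros)
  from continuous_on_tendsto_compose[OF cont this(1)] continuous_on_tendsto_compose[OF cont this(2)]
  have h_lim: "(\<lambda>m. h (b m) (a m)) \<longlonglongrightarrow> h b0 a0" "(\<lambda>m. h (b m) a') \<longlonglongrightarrow> h b0 a'"
    using seq lim a' by auto
  have "(\<lambda>m. h (b m) (a m) + e m * (norm (a m))\<^sup>2) \<longlonglongrightarrow> h b0 a0 + 0 * (norm a0)\<^sup>2"
    "(\<lambda>m. h (b m) a' + e m * (norm a')\<^sup>2) \<longlonglongrightarrow> h b0 a' + 0 * (norm a')\<^sup>2"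
    by (intro tendsto_intros h_lim seq)+
  from LIMSEQ_le[OF this] resp show ?thesis by simp
qed

lemma nash_equilibrium_exists:
  fixes f g :: "'a::euclidean_space \<Rightarrow> 'b::euclidean_space \<Rightarrow> real"
  assumes A: "compact A" "convex A" "A \<noteq> {}" and B: "compact B" "convex B" "B \<noteq> {}"
    and cf: "continuous_on (A \<times> B) (\<lambda>p. f (fst p) (snd p))"
    and cg: "continuous_on (A \<times> B) (\<lambda>p. g (fst p) (snd p))"
    and vf: "\<And>b. b \<in> B \<Longrightarrow> convex_on A (\<lambda>a. f a b)"
    and vg: "\<And>a. a \<in> A \<Longrightarrow> convex_on B (g a)"
  shows "\<exists>a\<in>A. \<exists>b\<in>B. (\<forall>a'\<in>A. f a b \<le> f a' b) \<and> (\<forall>b'\<in>B. g a b \<le> g a b')"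
proof -
  define e :: "nat \<Rightarrow> real" where "e m = inverse (real (Suc m))" for m
  have cf': "continuous_on (B \<times> A) (\<lambda>p. f (snd p) (fst p))"
    using continuous_on_swap_args[of A B f] cf by (simp add: split_def)
  have "\<exists>a\<in>A. \<exists>b\<in>B. (\<forall>a'\<in>A. f a b + e m * (norm a)\<^sup>2 \<le> f a' b + e m * (norm a')\<^sup>2)
      \<and> (\<forall>b'\<in>B. g a b + e m * (norm b)\<^sup>2 \<le> g a b' + e m * (norm b')\<^sup>2)" for m
    by (rule regularized_equilibrium_exists[OF A B cf' cg vf vg, of "e m"]) (auto simp: e_def)
  then obtain a b where ab: "\<And>m. a m \<in> A" "\<And>m. b m \<in> B"
    "\<And>m a'. a' \<in> A \<Longrightarrow> f (a m) (b m) + e m * (norm (a m))\<^sup>2 \<le> f a' (b m) + e m * (norm a')\<^sup>2"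
    "\<And>m b'. b' \<in> B \<Longrightarrow> g (a m) (b m) + e m * (norm (b m))\<^sup>2 \<le> g (a m) b' + e m * (norm b')\<^sup>2"
    by metis
  obtain l \<sigma> where l: "l \<in> A \<times> B" and \<sigma>: "strict_mono \<sigma>" and lim: "((\<lambda>m. (a m, b m)) \<circ> \<sigma>) \<longlonglongrightarrow> l"
    using compact_imp_seq_compact[OF compact_Times[OF A(1) B(1)]] ab(1,2)
    by (elim seq_compactE[of _ "\<lambda>m. (a m, b m)"]) auto
  have lim_a: "(a \<circ> \<sigma>) \<longlonglongrightarrow> fst l" and lim_b: "(b \<circ> \<sigma>) \<longlonglongrightarrow> snd l"
    using tendsto_fst[OF lim] tendsto_snd[OF lim] by (simp_all add: o_def)
  have lim_e: "(e \<circ> \<sigma>) \<longlonglongrightarrow> 0"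
    using LIMSEQ_subseq_LIMSEQ[OF LIMSEQ_inverse_real_of_nat \<sigma>] by (simp add: e_def o_def)
  have "f (fst l) (snd l) \<le> f a' (snd l)" if "a' \<in> A" for a'
    using regularized_best_response_limit[OF cf' _ _ lim_b lim_a lim_e _ _ that] l ab that
    by auto
  moreover have "g (fst l) (snd l) \<le> g (fst l) b'" if "b' \<in> B" for b'
    using regularized_best_response_limit[OF cg _ _ lim_a lim_b lim_e _ _ that] l ab that by auto
  ultimately show ?thesis using l by (intro bexI[of _ "fst l"] bexI[of _ "snd l"]) auto
qed

lemma vector_box_nonempty:
  assumes "\<And>i. S i \<noteq> {}"
  shows "{x :: 'a^'n::finite. \<forall>i. x $ i \<in> S i} \<noteq> {}"
proof -
  obtain s where "\<And>i. s i \<in> S i" using assms by (meson ex_in_conv)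
  then have "(\<chi> i. s i) \<in> {x :: 'a^'n. \<forall>i. x $ i \<in> S i}" by simp
  then show ?thesis by blast
qed

lemma convex_vector_box: "(\<And>i. convex (S i)) \<Longrightarrow> convex {x :: 'a::real_vector^'n::finite. \<forall>i. x $ i \<in> S i}"
  unfolding convex_def by (auto intro: convexD)

lemma compact_vector_box:
  fixes S :: "'n::finite \<Rightarrow> 'a::euclidean_space set"
  assumes "\<And>i. compact (S i)"
  shows "compact {x :: 'a^'n. \<forall>i. x $ i \<in> S i}"
proof -
  have "\<forall>i. \<exists>b. \<forall>t\<in>S i. norm t \<le> b"
    using assms by (meson compact_imp_bounded bounded_iff)
  then obtain B where B: "\<And>i t. t \<in> S i \<Longrightarrow> norm t \<le> B i" by metis
  have "norm x \<le> (\<Sum>i\<in>UNIV. B i)" if "\<forall>i. x $ i \<in> S i" for x :: "'a^'n"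
  proof -
    have "norm x \<le> (\<Sum>i\<in>UNIV. norm (x $ i))"
      unfolding norm_vec_def by (rule L2_set_le_sum) simp
    also have "\<dots> \<le> (\<Sum>i\<in>UNIV. B i)" using that B by (intro sum_mono) auto
    finally show ?thesis .
  qed
  then have "bounded {x :: 'a^'n. \<forall>i. x $ i \<in> S i}" unfolding bounded_iff by blast
  moreover have "closed {x :: 'a^'n. \<forall>i. x $ i \<in> S i}"
    using assms by (intro closed_vector_box allI compact_imp_closed)
  ultimately show ?thesis unfolding compact_eq_bounded_closed ..
qed

section \<open>Gaussian noise and polynomial growth\<close>

lemma prob_space_std_normal_measure: "prob_space std_normal_measure"
  unfolding std_normal_measure_def by (rule prob_space_normal_density) simp

lemma sets_std_normal_measure [measurable_cong]: "sets std_normal_measure = sets borel"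
  unfolding std_normal_measure_def by simp

lemma prob_space_noise_space: "prob_space (noise_space :: ('k::finite option + 'n::finite \<times> 'k \<Rightarrow> real) measure)"
  unfolding noise_space_def by (rule prob_space_PiM) (rule prob_space_std_normal_measure)

lemma measurable_noise_component [measurable]:
  "(\<lambda>\<omega>. \<omega> i) \<in> borel_measurable (noise_space :: ('k::finite option + 'n::finite \<times> 'k \<Rightarrow> real) measure)"
  unfolding noise_space_def measurable_cong_sets[OF refl sets_std_normal_measure[symmetric]]
  by (rule measurable_component_singleton) simp

lemma integrable_noise_component_power:
  "integrable (noise_space :: ('k::finite option + 'n::finite \<times> 'k \<Rightarrow> real) measure) (\<lambda>\<omega>. (\<omega> i) ^ k)"
proof -
  have "integrable std_normal_measure (\<lambda>x. x ^ k)"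
    unfolding std_normal_measure_def
    using integrable_std_normal_moment[of k] by (subst integrable_density) (auto simp: normal_density_nonneg)
  moreover have "distr noise_space std_normal_measure (\<lambda>\<omega>. \<omega> i) = std_normal_measure"
    unfolding noise_space_def by (rule distr_PiM_component) (auto intro: prob_space_std_normal_measure)
  ultimately show ?thesis
    by (subst integrable_distr_eq[symmetric, where N = std_normal_measure]) (auto simp: noise_space_def)
qed

definition growth_weight :: "('i::finite \<Rightarrow> real) \<Rightarrow> real" where
  "growth_weight \<omega> = 1 + (\<Sum>i\<in>UNIV. \<bar>\<omega> i\<bar>)"

lemma growth_weight_ge_1: "growth_weight \<omega> \<ge> 1"
  unfolding growth_weight_def by (simp add: sum_nonneg)

lemma integrable_growth_weight_power2:
  "integrable (noise_space :: ('k::finite option + 'n::finite \<times> 'k \<Rightarrow> real) measure)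
     (\<lambda>\<omega>. (growth_weight \<omega>)\<^sup>2)"
proof -
  let ?c = "real CARD('k option + 'n \<times> 'k)"
  let ?bound = "\<lambda>\<omega>::'k option + 'n \<times> 'k \<Rightarrow> real. 2 + 2 * (?c * (\<Sum>i\<in>UNIV. (\<omega> i)\<^sup>2))"
  have bound_integrable: "integrable noise_space ?bound"
    by (intro Bochner_Integration.integrable_add integrable_mult_right
        Bochner_Integration.integrable_sum integrable_noise_component_power
        finite_measure.integrable_const[OF prob_space.finite_measure[OF prob_space_noise_space]])
  have le_bound: "(growth_weight \<omega>)\<^sup>2 \<le> ?bound \<omega>" for \<omega>
  proof -
    have "(growth_weight \<omega>)\<^sup>2 \<le> 2 + 2 * (\<Sum>i\<in>UNIV. \<bar>\<omega> i\<bar>)\<^sup>2"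
      unfolding growth_weight_def using zero_le_power2[of "1 - (\<Sum>i\<in>UNIV. \<bar>\<omega> i\<bar>)"]
      by (simp add: power2_eq_square algebra_simps)
    also have "\<dots> \<le> ?bound \<omega>"
      using sum_squared_le_sum_of_squares[of "\<lambda>i. \<bar>\<omega> i\<bar>" UNIV] by (simp only: mult.commute power2_abs)
    finally show ?thesis .
  qed
  have "(\<lambda>\<omega>. (growth_weight \<omega>)\<^sup>2) \<in> borel_measurable noise_space"
    unfolding growth_weight_def by measurable
  then show ?thesis
    using le_bound by (intro Bochner_Integration.integrable_bound[OF bound_integrable] AE_I2)
      (simp_all add: sum_nonneg)
qed

definition poly_growth :: "nat \<Rightarrow> ('p::real_normed_vector \<Rightarrow> ('i::finite \<Rightarrow> real) \<Rightarrow> real) \<Rightarrow> bool" where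
  "poly_growth d F \<longleftrightarrow>
     (\<forall>R. \<exists>M\<ge>0. \<forall>\<theta> \<omega>. norm \<theta> \<le> R \<longrightarrow> \<bar>F \<theta> \<omega>\<bar> \<le> M * growth_weight \<omega> ^ d)"

lemma poly_growthD:
  assumes "poly_growth d F"
  obtains M where "M \<ge> 0" "\<And>\<theta> \<omega>. norm \<theta> \<le> R \<Longrightarrow> \<bar>F \<theta> \<omega>\<bar> \<le> M * growth_weight \<omega> ^ d"
  using assms unfolding poly_growth_def by blast

lemma poly_growth_param:
  fixes p :: "'p::euclidean_space \<Rightarrow> real"
  assumes "continuous_on UNIV p"
  shows "poly_growth d (\<lambda>\<theta> (\<omega>::'i::finite \<Rightarrow> real). p \<theta>)"
  unfolding poly_growth_def
proof
  fix R
  have "compact (p ` cball 0 R)"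
    by (rule compact_continuous_image) (auto intro: continuous_on_subset[OF assms])
  then obtain M where "M > 0" and M: "\<And>\<theta>. norm \<theta> \<le> R \<Longrightarrow> \<bar>p \<theta>\<bar> \<le> M"
    using compact_imp_bounded[of "p ` cball 0 R"] by (auto simp: bounded_pos)
  have "\<bar>p \<theta>\<bar> \<le> M * growth_weight \<omega> ^ d" if "norm \<theta> \<le> R" for \<theta> and \<omega> :: "'i \<Rightarrow> real"
    using M[OF that] one_le_power[OF growth_weight_ge_1[of \<omega>], of d] \<open>M > 0\<close>
    by (smt (verit) mult_le_cancel_left1)
  then show "\<exists>M\<ge>0. \<forall>\<theta> (\<omega>::'i \<Rightarrow> real). norm \<theta> \<le> R \<longrightarrow> \<bar>p \<theta>\<bar> \<le> M * growth_weight \<omega> ^ d"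
    using \<open>M > 0\<close> by (intro exI[of _ M]) auto
qed

lemma poly_growth_component: "poly_growth 1 (\<lambda>\<theta> (\<omega>::'i::finite \<Rightarrow> real). \<omega> i)"
proof -
  have "\<bar>\<omega> i\<bar> \<le> 1 * growth_weight \<omega> ^ 1" for \<omega> :: "'i \<Rightarrow> real"
    using member_le_sum[of i UNIV "\<lambda>i. \<bar>\<omega> i\<bar>"] unfolding growth_weight_def by simp
  then show ?thesis unfolding poly_growth_def by (intro allI exI[of _ 1]) simp
qed

lemma poly_growth_add:
  assumes "poly_growth d F" "poly_growth d G"
  shows "poly_growth d (\<lambda>\<theta> \<omega>. F \<theta> \<omega> + G \<theta> \<omega>)"
  unfolding poly_growth_def
proof
  fix R
  obtain M1 M2 where "M1 \<ge> 0" "\<And>\<theta> \<omega>. norm \<theta> \<le> R \<Longrightarrow> \<bar>F \<theta> \<omega>\<bar> \<le> M1 * growth_weight \<omega> ^ d"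
    "M2 \<ge> 0" "\<And>\<theta> \<omega>. norm \<theta> \<le> R \<Longrightarrow> \<bar>G \<theta> \<omega>\<bar> \<le> M2 * growth_weight \<omega> ^ d"
    using poly_growthD[OF assms(1)] poly_growthD[OF assms(2)] by metis
  then show "\<exists>M\<ge>0. \<forall>\<theta> \<omega>. norm \<theta> \<le> R \<longrightarrow> \<bar>F \<theta> \<omega> + G \<theta> \<omega>\<bar> \<le> M * growth_weight \<omega> ^ d"
    by (intro exI[of _ "M1 + M2"]) (auto simp: distrib_right intro: order_trans[OF abs_triangle_ineq add_mono])
qed

lemma poly_growth_mult:
  assumes "poly_growth d F" "poly_growth e G"
  shows "poly_growth (d + e) (\<lambda>\<theta> \<omega>. F \<theta> \<omega> * G \<theta> \<omega>)"
  unfolding poly_growth_def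
proof
  fix R
  obtain M1 M2 where M: "M1 \<ge> 0" "\<And>\<theta> \<omega>. norm \<theta> \<le> R \<Longrightarrow> \<bar>F \<theta> \<omega>\<bar> \<le> M1 * growth_weight \<omega> ^ d"
    "M2 \<ge> 0" "\<And>\<theta> \<omega>. norm \<theta> \<le> R \<Longrightarrow> \<bar>G \<theta> \<omega>\<bar> \<le> M2 * growth_weight \<omega> ^ e"
    using poly_growthD[OF assms(1)] poly_growthD[OF assms(2)] by metis
  have "\<bar>F \<theta> \<omega> * G \<theta> \<omega>\<bar> \<le> (M1 * M2) * growth_weight \<omega> ^ (d + e)" if "norm \<theta> \<le> R" for \<theta> \<omega>
    using mult_mono[OF M(2)[OF that] M(4)[OF that]] M(1) growth_weight_ge_1[of \<omega>]
    by (simp add: abs_mult power_add mult_ac)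
  then show "\<exists>M\<ge>0. \<forall>\<theta> \<omega>. norm \<theta> \<le> R \<longrightarrow> \<bar>F \<theta> \<omega> * G \<theta> \<omega>\<bar> \<le> M * growth_weight \<omega> ^ (d + e)"
    using M(1,3) by (intro exI[of _ "M1 * M2"]) auto
qed

lemma poly_growth_mono:
  assumes "d \<le> e" "poly_growth d F"
  shows "poly_growth e F"
  unfolding poly_growth_def
proof
  fix R
  obtain M where M: "M \<ge> 0" "\<And>\<theta> \<omega>. norm \<theta> \<le> R \<Longrightarrow> \<bar>F \<theta> \<omega>\<bar> \<le> M * growth_weight \<omega> ^ d"
    using poly_growthD[OF assms(2)] by metis
  have "M * growth_weight \<omega> ^ d \<le> M * growth_weight \<omega> ^ e" for \<omega>
    using M(1) growth_weight_ge_1[of \<omega>] assms(1) by (intro mult_left_mono power_increasing) auto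
  then show "\<exists>M\<ge>0. \<forall>\<theta> \<omega>. norm \<theta> \<le> R \<longrightarrow> \<bar>F \<theta> \<omega>\<bar> \<le> M * growth_weight \<omega> ^ e"
    using M by (intro exI[of _ M]) (auto intro: order_trans)
qed

lemma poly_growth_abs_le:
  "poly_growth d F \<Longrightarrow> (\<And>\<theta> \<omega>. \<bar>G \<theta> \<omega>\<bar> \<le> \<bar>F \<theta> \<omega>\<bar>) \<Longrightarrow> poly_growth d G"
  unfolding poly_growth_def by (meson order_trans)

lemma poly_growth_sum:
  "finite I \<Longrightarrow> (\<And>i. i \<in> I \<Longrightarrow> poly_growth d (F i)) \<Longrightarrow> poly_growth d (\<lambda>\<theta> \<omega>. \<Sum>i\<in>I. F i \<theta> \<omega>)"
proof (induction I rule: finite_induct)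
  case empty
  then show ?case unfolding poly_growth_def by auto
qed (simp add: poly_growth_add)

lemma poly_growth_const: "poly_growth d (\<lambda>\<theta> \<omega>. c)"
proof -
  have "\<bar>c\<bar> \<le> \<bar>c\<bar> * growth_weight \<omega> ^ d" for \<omega>
    using mult_left_mono[OF one_le_power[OF growth_weight_ge_1[of \<omega>]], of "\<bar>c\<bar>" d] by simp
  then show ?thesis unfolding poly_growth_def by (intro allI exI[of _ "\<bar>c\<bar>"]) auto
qed

lemma poly_growth_cmult: "poly_growth d F \<Longrightarrow> poly_growth d (\<lambda>\<theta> \<omega>. c * F \<theta> \<omega>)"
  using poly_growth_mult[OF poly_growth_const[of 0 c], of d F] by simp

lemma poly_growth_diff:
  "poly_growth d F \<Longrightarrow> poly_growth d G \<Longrightarrow> poly_growth d (\<lambda>\<theta> \<omega>. F \<theta> \<omega> - G \<theta> \<omega>)"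
  using poly_growth_add[of d F "\<lambda>\<theta> \<omega>. - G \<theta> \<omega>"] poly_growth_abs_le[of d G "\<lambda>\<theta> \<omega>. - G \<theta> \<omega>"] by simp

lemma poly_growth_max0: "poly_growth d F \<Longrightarrow> poly_growth d (\<lambda>\<theta> \<omega>. max 0 (F \<theta> \<omega>))"
  by (erule poly_growth_abs_le) auto

lemma poly_growth_affine_noise:
  fixes p q :: "'p::euclidean_space \<Rightarrow> real"
  assumes "continuous_on UNIV p" "continuous_on UNIV q"
  shows "poly_growth 1 (\<lambda>\<theta> (\<omega>::'i::finite \<Rightarrow> real). p \<theta> + q \<theta> * \<omega> i)"
  using poly_growth_add[OF poly_growth_param[OF assms(1)]
      poly_growth_mult[OF poly_growth_param[OF assms(2)] poly_growth_component, of 0 i]]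
  by simp

lemma continuous_on_parametric_integral:
  fixes G :: "'p::euclidean_space \<Rightarrow> 'w \<Rightarrow> real"
  assumes meas: "\<And>\<theta>. G \<theta> \<in> borel_measurable M"
    and cont: "\<And>\<omega>. continuous_on UNIV (\<lambda>\<theta>. G \<theta> \<omega>)"
    and dominated: "\<And>R. \<exists>Q. integrable M Q \<and> (\<forall>\<theta> \<omega>. norm \<theta> \<le> R \<longrightarrow> \<bar>G \<theta> \<omega>\<bar> \<le> Q \<omega>)"
  shows "continuous_on S (\<lambda>\<theta>. \<integral>\<omega>. G \<theta> \<omega> \<partial>M)"
proof (rule continuous_on_sequentiallyI)
  fix u :: "nat \<Rightarrow> 'p" and a assume lim: "u \<longlonglongrightarrow> a"
  then have "Bseq u" by (rule convergent_imp_Bseq[OF convergentI])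
  then obtain K where K: "\<And>n. norm (u n) \<le> K" by (auto simp: Bseq_def)
  obtain Q where Q: "integrable M Q" "\<And>\<theta> \<omega>. norm \<theta> \<le> K \<Longrightarrow> \<bar>G \<theta> \<omega>\<bar> \<le> Q \<omega>"
    using dominated[of K] by blast
  show "(\<lambda>n. \<integral>\<omega>. G (u n) \<omega> \<partial>M) \<longlonglongrightarrow> \<integral>\<omega>. G a \<omega> \<partial>M"
  proof (rule integral_dominated_convergence[where w = Q])
    show "AE \<omega> in M. (\<lambda>n. G (u n) \<omega>) \<longlonglongrightarrow> G a \<omega>"
      using continuous_on_tendsto_compose[OF cont lim] by simp
    show "AE \<omega> in M. norm (G (u n) \<omega>) \<le> Q \<omega>" for n
      using Q(2)[OF K[of n]] by simp
  qed (use meas Q in auto)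
qed

lemma poly_growth_dominated:
  fixes F :: "'p::real_normed_vector \<Rightarrow> ('k::finite option + 'n::finite \<times> 'k \<Rightarrow> real) \<Rightarrow> real"
  assumes "poly_growth 2 F"
  shows "\<exists>Q. integrable (noise_space :: ('k option + 'n \<times> 'k \<Rightarrow> real) measure) Q
    \<and> (\<forall>\<theta> \<omega>. norm \<theta> \<le> R \<longrightarrow> \<bar>F \<theta> \<omega>\<bar> \<le> Q \<omega>)"
proof -
  obtain M where "\<And>\<theta> \<omega>. norm \<theta> \<le> R \<Longrightarrow> \<bar>F \<theta> \<omega>\<bar> \<le> M * (growth_weight \<omega>)\<^sup>2"
    using poly_growthD[OF assms] by metis
  then show ?thesis
    by (intro exI[of _ "\<lambda>\<omega>. M * (growth_weight \<omega>)\<^sup>2"]) (auto intro: integrable_growth_weight_power2)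
qed

lemma integrable_poly_growth:
  fixes F :: "'p::real_normed_vector \<Rightarrow> ('k::finite option + 'n::finite \<times> 'k \<Rightarrow> real) \<Rightarrow> real"
  assumes "poly_growth 2 F" "F \<theta> \<in> borel_measurable noise_space"
  shows "integrable (noise_space :: ('k option + 'n \<times> 'k \<Rightarrow> real) measure) (F \<theta>)"
proof -
  obtain Q where Q: "integrable noise_space Q" "\<And>\<omega>. \<bar>F \<theta> \<omega>\<bar> \<le> Q \<omega>"
    using poly_growth_dominated[OF assms(1), of "norm \<theta>"] by blast
  have "norm (F \<theta> \<omega>) \<le> norm (Q \<omega>)" for \<omega>
    using Q(2)[of \<omega>] abs_ge_self[of "Q \<omega>"] unfolding real_norm_def by linarith
  then show ?thesis
    by (intro Bochner_Integration.integrable_bound[OF Q(1) assms(2)] AE_I2)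
qed

section \<open>The game\<close>

lemma norm_power2_cart: "(norm (v :: real^'k::finite))\<^sup>2 = (\<Sum>j\<in>UNIV. (v $ j)\<^sup>2)"
  by (simp only: power2_norm_eq_inner inner_vec_def) (simp add: power2_eq_square)

lemma c_l_coordinates:
  "c_l \<rho> y w X = \<rho> / 2 * (\<Sum>j\<in>UNIV. (fst w $ j)\<^sup>2)
     + (\<Sum>i\<in>UNIV. max 0 (1 - y i * ((\<Sum>j\<in>UNIV. fst w $ j * X $ i $ j) + snd w)))"
  unfolding c_l_def hinge_def norm_power2_cart inner_vec_def by simp

lemma c_d_coordinates:
  "c_d \<rho> y xhat w X = \<rho> / 2 * (\<Sum>i\<in>UNIV. \<Sum>j\<in>UNIV. (X $ i $ j - xhat $ i $ j)\<^sup>2)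
     + (\<Sum>i\<in>UNIV. max 0 (1 + y i * ((\<Sum>j\<in>UNIV. fst w $ j * X $ i $ j) + snd w)))"
  unfolding c_d_def hinge_def norm_power2_cart inner_vec_def by simp

lemma w_of_nth: "fst (w_of \<theta>l \<omega>) $ j = fst (fst \<theta>l) $ j + fst (snd \<theta>l) $ j * \<omega> (Inl (Some j))"
  and w_of_snd: "snd (w_of \<theta>l \<omega>) = snd (fst \<theta>l) + snd (snd \<theta>l) * \<omega> (Inl None)"
  and X_of_nth: "X_of \<theta>d \<omega> $ i $ j = fst (\<theta>d $ i) $ j + snd (\<theta>d $ i) $ j * \<omega> (Inr (i, j))"
  by (simp_all add: w_of_def X_of_def)

lemma learner_cost_measurable:
  "(\<lambda>\<omega>. c_l \<rho> y (w_of \<theta>l \<omega>) (X_of \<theta>d \<omega>)) \<in> borel_measurable noise_space"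
  unfolding c_l_coordinates w_of_nth w_of_snd X_of_nth by measurable

lemma generator_cost_measurable:
  "(\<lambda>\<omega>. c_d \<rho> y xhat (w_of \<theta>l \<omega>) (X_of \<theta>d \<omega>)) \<in> borel_measurable noise_space"
  unfolding c_d_coordinates w_of_nth w_of_snd X_of_nth by measurable

lemma learner_cost_continuous:
  "continuous_on UNIV (\<lambda>p. c_l \<rho> y (w_of (fst p) \<omega>) (X_of (snd p) \<omega>))"
  unfolding c_l_coordinates w_of_nth w_of_snd X_of_nth by (intro continuous_intros)

lemma generator_cost_continuous:
  "continuous_on UNIV (\<lambda>p. c_d \<rho> y xhat (w_of (fst p) \<omega>) (X_of (snd p) \<omega>))"
  unfolding c_d_coordinates w_of_nth w_of_snd X_of_nth by (intro continuous_intros)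

lemma learner_cost_poly_growth:
  "poly_growth 2 (\<lambda>(p :: 'k::finite lstrat \<times> (('k dstrat)^'n::finite)) \<omega>.
     c_l \<rho> y (w_of (fst p) \<omega>) (X_of (snd p) \<omega>))"
proof -
  have w: "poly_growth 1 (\<lambda>(p :: 'k lstrat \<times> (('k dstrat)^'n)) \<omega>. fst (w_of (fst p) \<omega>) $ j)" for j
    unfolding w_of_nth by (intro poly_growth_affine_noise continuous_intros)
  have b: "poly_growth 2 (\<lambda>(p :: 'k lstrat \<times> (('k dstrat)^'n)) \<omega>. snd (w_of (fst p) \<omega>))"
    unfolding w_of_snd
    by (rule poly_growth_mono[of 1]) (simp, intro poly_growth_affine_noise continuous_intros)
  have x: "poly_growth 1 (\<lambda>(p :: 'k lstrat \<times> (('k dstrat)^'n)) \<omega>. X_of (snd p) \<omega> $ i $ j)" for i j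
    unfolding X_of_nth by (intro poly_growth_affine_noise continuous_intros)
  have "poly_growth 2 (\<lambda>(p :: 'k lstrat \<times> (('k dstrat)^'n)) \<omega>. fst (w_of (fst p) \<omega>) $ j * X_of (snd p) \<omega> $ i $ j)"
    "poly_growth 2 (\<lambda>(p :: 'k lstrat \<times> (('k dstrat)^'n)) \<omega>. (fst (w_of (fst p) \<omega>) $ j)\<^sup>2)" for i j
    using poly_growth_mult[OF w x, unfolded one_add_one] poly_growth_mult[OF w w, unfolded one_add_one]
    by (simp_all add: power2_eq_square)
  then show ?thesis
    unfolding c_l_coordinates
    by (intro poly_growth_add poly_growth_cmult poly_growth_sum poly_growth_max0 poly_growth_diff
        poly_growth_const b finite)
qed

lemma generator_cost_poly_growth:
  "poly_growth 2 (\<lambda>(p :: 'k::finite lstrat \<times> (('k dstrat)^'n::finite)) \<omega>.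
     c_d \<rho> y xhat (w_of (fst p) \<omega>) (X_of (snd p) \<omega>))"
proof -
  have w: "poly_growth 1 (\<lambda>(p :: 'k lstrat \<times> (('k dstrat)^'n)) \<omega>. fst (w_of (fst p) \<omega>) $ j)" for j
    unfolding w_of_nth by (intro poly_growth_affine_noise continuous_intros)
  have b: "poly_growth 2 (\<lambda>(p :: 'k lstrat \<times> (('k dstrat)^'n)) \<omega>. snd (w_of (fst p) \<omega>))"
    unfolding w_of_snd
    by (rule poly_growth_mono[of 1]) (simp, intro poly_growth_affine_noise continuous_intros)
  have x: "poly_growth 1 (\<lambda>(p :: 'k lstrat \<times> (('k dstrat)^'n)) \<omega>. X_of (snd p) \<omega> $ i $ j)" for i j
    unfolding X_of_nth by (intro poly_growth_affine_noise continuous_intros)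
  have x_centred: "poly_growth 1 (\<lambda>(p :: 'k lstrat \<times> (('k dstrat)^'n)) \<omega>. X_of (snd p) \<omega> $ i $ j - xhat $ i $ j)" for i j
    by (intro poly_growth_diff x poly_growth_const)
  have "poly_growth 2 (\<lambda>(p :: 'k lstrat \<times> (('k dstrat)^'n)) \<omega>. fst (w_of (fst p) \<omega>) $ j * X_of (snd p) \<omega> $ i $ j)"
    "poly_growth 2 (\<lambda>(p :: 'k lstrat \<times> (('k dstrat)^'n)) \<omega>. (X_of (snd p) \<omega> $ i $ j - xhat $ i $ j)\<^sup>2)" for i j
    using poly_growth_mult[OF w x, unfolded one_add_one]
      poly_growth_mult[OF x_centred x_centred, unfolded one_add_one]
    by (simp_all add: power2_eq_square)
  then show ?thesis
    unfolding c_d_coordinates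
    by (intro poly_growth_add poly_growth_cmult poly_growth_sum poly_growth_max0
        poly_growth_const b finite)
qed

lemma affine_fun_w_of:
  "affine_fun (\<lambda>\<theta>l. fst (w_of \<theta>l \<omega>) $ j)" "affine_fun (\<lambda>\<theta>l. snd (w_of \<theta>l \<omega>))"
  unfolding w_of_nth w_of_snd affine_fun_def by (simp_all add: algebra_simps)

lemma affine_fun_X_of: "affine_fun (\<lambda>\<theta>d. X_of \<theta>d \<omega> $ i $ j)"
  unfolding X_of_nth affine_fun_def by (simp add: algebra_simps)

lemma learner_cost_convex:
  assumes "\<rho> \<ge> 0" "convex S"
  shows "convex_on S (\<lambda>\<theta>l. c_l \<rho> y (w_of \<theta>l \<omega>) (X_of \<theta>d \<omega>))"
  unfolding c_l_coordinates using assms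
  by (intro convex_on_add convex_on_cmul convex_on_sum_fun finite
      convex_on_compose_affine_fun[OF convex_power2] convex_on_compose_affine_fun[OF convex_max0]
      affine_fun_diff affine_fun_const affine_fun_cmult affine_fun_add affine_fun_sum
      affine_fun_mult_const affine_fun_w_of) auto

lemma generator_cost_convex:
  assumes "\<rho> \<ge> 0" "convex S"
  shows "convex_on S (\<lambda>\<theta>d. c_d \<rho> y xhat (w_of \<theta>l \<omega>) (X_of \<theta>d \<omega>))"
  unfolding c_d_coordinates using assms
  by (intro convex_on_add convex_on_cmul convex_on_sum_fun finite
      convex_on_compose_affine_fun[OF convex_power2] convex_on_compose_affine_fun[OF convex_max0]
      affine_fun_diff affine_fun_const affine_fun_cmult affine_fun_add affine_fun_sum
      affine_fun_X_of) auto

lemma integrable_learner_cost: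
  "integrable noise_space (\<lambda>\<omega>. c_l \<rho> y (w_of \<theta>l \<omega>) (X_of \<theta>d \<omega>))"
  using integrable_poly_growth[OF learner_cost_poly_growth learner_cost_measurable, where \<theta> = "(\<theta>l, \<theta>d)"]
  by simp

lemma integrable_generator_cost:
  "integrable noise_space (\<lambda>\<omega>. c_d \<rho> y xhat (w_of \<theta>l \<omega>) (X_of \<theta>d \<omega>))"
  using integrable_poly_growth[OF generator_cost_poly_growth generator_cost_measurable, where \<theta> = "(\<theta>l, \<theta>d)"]
  by simp

lemma continuous_on_cbar_l:
  "continuous_on S (\<lambda>p. cbar_l \<rho> y (fst p :: 'k::finite lstrat) (snd p :: ('k dstrat)^'n::finite))"
  unfolding cbar_l_def
  by (rule continuous_on_parametric_integral[OF learner_cost_measurable learner_cost_continuous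
        poly_growth_dominated[OF learner_cost_poly_growth]])

lemma continuous_on_cbar_d:
  "continuous_on S (\<lambda>p. cbar_d \<rho> y xhat (fst p :: 'k::finite lstrat) (snd p :: ('k dstrat)^'n::finite))"
  unfolding cbar_d_def
  by (rule continuous_on_parametric_integral[OF generator_cost_measurable generator_cost_continuous
        poly_growth_dominated[OF generator_cost_poly_growth]])

lemma convex_on_cbar_l:
  assumes "\<rho> \<ge> 0" "convex S"
  shows "convex_on S (\<lambda>\<theta>l. cbar_l \<rho> y \<theta>l \<theta>d)"
  unfolding cbar_l_def using assms
  by (intro convex_on_integral learner_cost_convex integrable_learner_cost)

lemma convex_on_cbar_d:
  assumes "\<rho> \<ge> 0" "convex S"
  shows "convex_on S (\<lambda>\<theta>d. cbar_d \<rho> y xhat \<theta>l \<theta>d)"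
  unfolding cbar_d_def using assms
  by (intro convex_on_integral generator_cost_convex integrable_generator_cost)

theorem mainTheorem4:
  fixes xhat :: "real^'k::finite^'n::finite"
    and y :: "'n \<Rightarrow> real"
    and \<rho>l \<rho>d :: real
    and \<Theta>l :: "'k lstrat set"
    and \<Theta>di :: "'n \<Rightarrow> 'k dstrat set"
    and \<Theta>d :: "(('k dstrat)^'n) set"
  assumes y: "\<And>i. y i \<in> {-1, 1}"
    and \<rho>: "\<rho>l > 0" "\<rho>d > 0"
    and \<Theta>l: "\<Theta>l \<noteq> {}" "compact \<Theta>l" "convex \<Theta>l"
    and \<Theta>l_nonneg: "\<And>\<theta>. \<theta> \<in> \<Theta>l \<Longrightarrow> (\<forall>j. fst (snd \<theta>) $ j \<ge> 0) \<and> snd (snd \<theta>) \<ge> 0"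
    and \<Theta>di: "\<And>i. \<Theta>di i \<noteq> {}" "\<And>i. compact (\<Theta>di i)" "\<And>i. convex (\<Theta>di i)"
    and \<Theta>di_nonneg: "\<And>i \<theta>. \<theta> \<in> \<Theta>di i \<Longrightarrow> (\<forall>j. snd \<theta> $ j \<ge> 0)"
    and \<Theta>d: "\<Theta>d = {\<theta>d. \<forall>i. \<theta>d $ i \<in> \<Theta>di i}"
  shows "(\<forall>\<theta>d\<in>\<Theta>d. convex_on \<Theta>l (\<lambda>\<theta>l. cbar_l \<rho>l y \<theta>l \<theta>d))
       \<and> (\<forall>\<theta>l\<in>\<Theta>l. convex_on \<Theta>d (\<lambda>\<theta>d. cbar_d \<rho>d y xhat \<theta>l \<theta>d))
       \<and> (\<exists>\<theta>ls\<in>\<Theta>l. \<exists>\<theta>ds\<in>\<Theta>d.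
            (\<forall>\<theta>l\<in>\<Theta>l. cbar_l \<rho>l y \<theta>ls \<theta>ds \<le> cbar_l \<rho>l y \<theta>l \<theta>ds)
          \<and> (\<forall>\<theta>d\<in>\<Theta>d. cbar_d \<rho>d y xhat \<theta>ls \<theta>ds \<le> cbar_d \<rho>d y xhat \<theta>ls \<theta>d))"
proof -
  have D: "\<Theta>d \<noteq> {}" "compact \<Theta>d" "convex \<Theta>d"
    unfolding \<Theta>d
    by (fact vector_box_nonempty[OF \<Theta>di(1)] compact_vector_box[OF \<Theta>di(2)]
        convex_vector_box[OF \<Theta>di(3)])+
  have convex_l: "convex_on \<Theta>l (\<lambda>\<theta>l. cbar_l \<rho>l y \<theta>l \<theta>d)" for \<theta>d
    using \<rho>(1) \<Theta>l(3) by (intro convex_on_cbar_l) simp_all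
  have convex_d: "convex_on \<Theta>d (\<lambda>\<theta>d. cbar_d \<rho>d y xhat \<theta>l \<theta>d)" for \<theta>l
    using \<rho>(2) D(3) by (intro convex_on_cbar_d) simp_all
  have "\<exists>\<theta>ls\<in>\<Theta>l. \<exists>\<theta>ds\<in>\<Theta>d. (\<forall>\<theta>l\<in>\<Theta>l. cbar_l \<rho>l y \<theta>ls \<theta>ds \<le> cbar_l \<rho>l y \<theta>l \<theta>ds)
      \<and> (\<forall>\<theta>d\<in>\<Theta>d. cbar_d \<rho>d y xhat \<theta>ls \<theta>ds \<le> cbar_d \<rho>d y xhat \<theta>ls \<theta>d)"
    by (rule nash_equilibrium_exists[OF \<Theta>l(2,3,1) D(2,3,1) continuous_on_cbar_l continuous_on_cbar_d
          convex_l convex_d])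
  then show ?thesis using convex_l convex_d by (intro conjI ballI)
qed

end
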